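(* Let $q=p^k$ with $p$ prime, and let $L\subseteq[q-1]$. Let $\mathcal{F}\subseteq2^{[n]}$ be $q$-modular $L$-differencing Sperner. If $\sum_{\ell\in L}v_p(\ell)<k$, then $$|\mathcal{F}|\le\sum_{i=0}^{|L|}\binom{n}{i}.$$
   Context: $v_p(m)$ is the exponent of $p$ in the integer $m$. For $L\subseteq[q-1]$, $\mathcal{F}\subseteq2^{[n]}$ is $q$-modular $L$-differencing Sperner if for all distinct $A,B\in\mathcal{F}$, $|A\setminus B|\equiv\ell\pmod q$ for some $\ell\in L$. *)

theory Defs
  imports "HOL-Computational_Algebra.Primes" "HOL-Number_Theory.Cong"
begin

definition mod_L_diff_sperner :: "nat \<Rightarrow> nat set \<Rightarrow> nat set set \<Rightarrow> bool" where
  "mod_L_diff_sperner q L F \<longleftrightarrow>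
     (\<forall>A\<in>F. \<forall>B\<in>F. A \<noteq> B \<longrightarrow> (\<exists>l\<in>L. [card (A - B) = l] (mod q)))"

end

theory Submission
  imports Defs "HOL.Rat" "HOL.Vector_Spaces" "HOL-Library.Function_Algebras"
begin

text \<open>
  For \<open>A \<in> F\<close> consider \<open>g\<^sub>A(B) = \<Prod>l\<in>L. (|A - B| - l)\<close> as a function of \<open>B \<subseteq> [n]\<close>.
  Since \<open>|A - B| = |A| - \<Sum>i\<in>A. [i \<in> B]\<close>, each \<open>g\<^sub>A\<close> is a multilinear polynomial of
  degree at most \<open>|L|\<close> in the indicator variables, so it lies in a space of dimension
  \<open>\<Sum>i\<le>|L|. (n choose i)\<close>. It remains to show that the \<open>g\<^sub>A\<close> are linearly independent.
  Let \<open>s = \<Sum>l\<in>L. v\<^sub>p(l) < k\<close>. The off-diagonal entries \<open>g\<^sub>A(B)\<close>, \<open>A \<noteq> B\<close>, are divisible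
  by \<open>q = p\<^sup>k\<close>, hence by \<open>p\<^sup>s\<^sup>+\<^sup>1\<close>, while the diagonal entries \<open>\<plusminus>\<Prod>l\<in>L. l\<close> have
  valuation exactly \<open>s\<close>. In a nontrivial integer relation among the \<open>g\<^sub>A\<close>, evaluating at the
  \<open>A\<close> whose coefficient has least valuation gives a contradiction modulo a power of \<open>p\<close>.
\<close>

definition fun_scale :: "'f::field \<Rightarrow> ('a \<Rightarrow> 'f) \<Rightarrow> 'a \<Rightarrow> 'f" where
  "fun_scale c f = (\<lambda>x. c * f x)"

interpretation fun_vs: vector_space "fun_scale :: 'f::field \<Rightarrow> ('a \<Rightarrow> 'f) \<Rightarrow> 'a \<Rightarrow> 'f"
  by unfold_locales (auto simp: fun_scale_def fun_eq_iff algebra_simps)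

lemma fun_scale_apply: "fun_scale c f x = c * f x"
  by (simp add: fun_scale_def)

lemma sum_fun_apply: "sum f A x = (\<Sum>i\<in>A. f i x)"
  by (induction A rule: infinite_finite_induct) auto

text \<open>The monomial \<open>\<Prod>\<^sub>i\<^sub>\<in>\<^sub>S x\<^sub>i\<close> evaluated at the characteristic vector of \<open>B\<close>.\<close>
definition set_monomial :: "'a set \<Rightarrow> 'a set \<Rightarrow> 'f::field" where
  "set_monomial S B = (if S \<subseteq> B then 1 else 0)"

definition multilinear_polys :: "'a set \<Rightarrow> nat \<Rightarrow> ('a set \<Rightarrow> 'f::field) set" where
  "multilinear_polys N d = fun_vs.span (set_monomial ` {S. S \<subseteq> N \<and> card S \<le> d})"

lemma multilinear_polys_mono: "d \<le> d' \<Longrightarrow> multilinear_polys N d \<subseteq> multilinear_polys N d'"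
  unfolding multilinear_polys_def by (intro fun_vs.span_mono) auto

lemma set_monomial_insert: "set_monomial {i} * set_monomial S = set_monomial (insert i S)"
  by (auto simp: set_monomial_def fun_eq_iff)

lemma variable_times_multilinear_polys:
  assumes "h \<in> multilinear_polys N d" "i \<in> N"
  shows "set_monomial {i} * h \<in> multilinear_polys N (Suc d)"
  using assms(1) unfolding multilinear_polys_def
proof (induction rule: fun_vs.span_induct_alt)
  case base
  show ?case by (metis fun_vs.span_zero mult_zero_right)
next
  case (step c x y)
  then obtain S where S: "x = set_monomial S" "S \<subseteq> N" "card S \<le> d" by auto
  have "card (insert i S) \<le> Suc d"
    using S(3) card_insert_le_m1[of "Suc d" S i] by simp
  then have "set_monomial {i} * x \<in> fun_vs.span (set_monomial ` {S. S \<subseteq> N \<and> card S \<le> Suc d})"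
    using S assms(2) by (intro fun_vs.span_base) (auto simp: set_monomial_insert)
  then have "fun_scale c (set_monomial {i} * x) + set_monomial {i} * y
      \<in> fun_vs.span (set_monomial ` {S. S \<subseteq> N \<and> card S \<le> Suc d})"
    using step.IH by (intro fun_vs.span_add fun_vs.span_scale)
  moreover have "set_monomial {i} * (fun_scale c x + y) =
      fun_scale c (set_monomial {i} * x) + set_monomial {i} * y"
    by (simp add: fun_eq_iff fun_scale_apply algebra_simps)
  ultimately show ?case
    by (simp only:)
qed

lemma of_nat_card_Diff_eq:
  assumes "finite A"
  shows "of_nat (card (A - B)) = of_nat (card A) - (\<Sum>i\<in>A. set_monomial {i} B :: 'f::field)"
proof -
  have "(\<Sum>i\<in>A. set_monomial {i} B :: 'f) = of_nat (card (A \<inter> B))"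
    using assms by (simp add: set_monomial_def sum.If_cases Int_def)
  moreover have "card A = card (A \<inter> B) + card (A - B)"
    using assms by (rule card_Int_Diff)
  ultimately show ?thesis by simp
qed

lemma card_Diff_affine_times_multilinear_polys:
  assumes "h \<in> multilinear_polys N d" "A \<subseteq> N" "finite A"
  shows "(\<lambda>B. (of_nat (card (A - B)) - c) * h B) \<in> multilinear_polys N (Suc d)"
proof -
  have "(\<lambda>B. (of_nat (card (A - B)) - c) * h B) =
      fun_scale (of_nat (card A) - c) h - (\<Sum>i\<in>A. set_monomial {i} * h)"
  proof
    fix B
    have "(of_nat (card (A - B)) - c) * h B =
        (of_nat (card A) - c) * h B - (\<Sum>i\<in>A. set_monomial {i} B * h B)"
      using assms(3) by (simp add: of_nat_card_Diff_eq left_diff_distrib sum_distrib_right)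
    then show "(of_nat (card (A - B)) - c) * h B =
        (fun_scale (of_nat (card A) - c) h - (\<Sum>i\<in>A. set_monomial {i} * h)) B"
      by (simp add: fun_scale_apply sum_fun_apply)
  qed
  moreover have "h \<in> multilinear_polys N (Suc d)"
    using assms(1) multilinear_polys_mono[of d "Suc d" N] by auto
  ultimately show ?thesis
    using variable_times_multilinear_polys[OF assms(1)] assms(2) unfolding multilinear_polys_def
    by (auto intro!: fun_vs.span_diff fun_vs.span_scale fun_vs.span_sum)
qed

lemma prod_card_Diff_in_multilinear_polys:
  fixes A N :: "'a set" and c :: "'b \<Rightarrow> 'f::field"
  assumes "finite L" "A \<subseteq> N" "finite A"
  shows "(\<lambda>B. \<Prod>l\<in>L. of_nat (card (A - B)) - c l) \<in> multilinear_polys N (card L)"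
  using assms(1)
proof (induction L rule: finite_induct)
  case empty
  have "(\<lambda>B :: 'a set. 1 :: 'f) = set_monomial {}"
    by (auto simp: set_monomial_def fun_eq_iff)
  then show ?case
    unfolding multilinear_polys_def by (auto intro!: fun_vs.span_base)
next
  case (insert l L)
  then show ?case
    using card_Diff_affine_times_multilinear_polys[OF insert.IH assms(2,3), of "c l"] by simp
qed

lemma card_subsets_card_le:
  assumes "finite N"
  shows "card {S. S \<subseteq> N \<and> card S \<le> m} = (\<Sum>i=0..m. card N choose i)"
proof -
  have fin: "finite {S. S \<subseteq> N \<and> card S = i}" for i
    by (rule rev_finite_subset[of "Pow N"]) (auto simp: assms)
  have "card {S. S \<subseteq> N \<and> card S \<le> m} = card (\<Union>i\<in>{0..m}. {S. S \<subseteq> N \<and> card S = i})"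
    by (rule arg_cong[where f = card]) auto
  also have "\<dots> = (\<Sum>i=0..m. card {S. S \<subseteq> N \<and> card S = i})"
    by (rule card_UN_disjoint) (auto simp: fin)
  also have "\<dots> = (\<Sum>i=0..m. card N choose i)"
    using assms by (simp add: n_subsets)
  finally show ?thesis .
qed

lemma card_independent_multilinear_polys_le:
  fixes X :: "('a set \<Rightarrow> 'f::field) set"
  assumes "finite N" "fun_vs.independent X" "X \<subseteq> multilinear_polys N d"
  shows "card X \<le> (\<Sum>i=0..d. card N choose i)"
proof -
  let ?M = "{S. S \<subseteq> N \<and> card S \<le> d}"
  have "finite ?M"
    by (rule rev_finite_subset[of "Pow N"]) (auto simp: assms(1))
  then have "card X \<le> card (set_monomial ` ?M :: ('a set \<Rightarrow> 'f) set)"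
    using fun_vs.independent_span_bound assms(2,3) unfolding multilinear_polys_def by blast
  also have "\<dots> \<le> card ?M"
    using \<open>finite ?M\<close> by (rule card_image_le)
  finally show ?thesis
    using card_subsets_card_le[OF assms(1)] by simp
qed

text \<open>Choose a row whose coefficient has least p-adic valuation \<open>r\<close>: all other terms of
  column \<open>A\<^sub>0\<close> are divisible by \<open>P\<^sup>r\<^sup>+\<^sup>s\<^sup>+\<^sup>1\<close>, the diagonal term is not.\<close>
lemma null_combination_vanishes_mod_prime_power:
  fixes e :: "'x \<Rightarrow> int" and G :: "'x \<Rightarrow> 'x \<Rightarrow> int"
  assumes "prime P" "finite T"
    and null: "\<And>B. B \<in> T \<Longrightarrow> (\<Sum>A\<in>T. e A * G A B) = 0"
    and diag: "\<And>A. A \<in> T \<Longrightarrow> \<not> P ^ Suc s dvd G A A"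
    and off: "\<And>A B. A \<in> T \<Longrightarrow> B \<in> T \<Longrightarrow> A \<noteq> B \<Longrightarrow> P ^ Suc s dvd G A B"
    and "A \<in> T"
  shows "e A = 0"
proof (rule ccontr)
  assume "e A \<noteq> 0"
  then obtain A0 where A0: "A0 \<in> T" "e A0 \<noteq> 0"
    and least: "\<And>A. A \<in> T \<Longrightarrow> e A \<noteq> 0 \<Longrightarrow> multiplicity P (e A0) \<le> multiplicity P (e A)"
    using ex_has_least_nat[of "\<lambda>A. A \<in> T \<and> e A \<noteq> 0" A "\<lambda>A. multiplicity P (e A)"] \<open>A \<in> T\<close>
    by blast
  define r where "r = multiplicity P (e A0)"
  have "P ^ r * P ^ Suc s dvd e A * G A A0" if "A \<in> T - {A0}" for A
  proof (intro mult_dvd_mono)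
    show "P ^ r dvd e A"
      using least[of A] that by (cases "e A = 0") (auto simp: r_def intro: multiplicity_dvd')
    show "P ^ Suc s dvd G A A0"
      using off[of A A0] that A0(1) by blast
  qed
  then have "P ^ r * P ^ Suc s dvd (\<Sum>A\<in>T - {A0}. e A * G A A0)"
    by (rule dvd_sum)
  moreover have "e A0 * G A0 A0 = - (\<Sum>A\<in>T - {A0}. e A * G A A0)"
    using null[OF A0(1)] sum.remove[OF \<open>finite T\<close> A0(1), of "\<lambda>A. e A * G A A0"] by simp
  ultimately have "P ^ r * P ^ Suc s dvd e A0 * G A0 A0"
    by simp
  moreover obtain y where y: "e A0 = P ^ r * y" "\<not> P dvd y"
    using multiplicity_decompose'[of "e A0" P] A0(2) \<open>prime P\<close> not_prime_unit
    unfolding r_def by blast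
  ultimately have "P ^ Suc s dvd y * G A0 A0"
    using \<open>prime P\<close> by (simp add: mult.assoc)
  moreover have "coprime (P ^ Suc s) y"
    using prime_imp_coprime[OF \<open>prime P\<close> y(2)] by simp
  ultimately show False
    using diag[OF A0(1)] coprime_dvd_mult_right_iff by blast
qed

lemma common_denominator:
  fixes c :: "'x \<Rightarrow> rat"
  assumes "finite T"
  obtains d :: int where "d > 0" "\<And>x. x \<in> T \<Longrightarrow> of_int d * c x \<in> \<int>"
proof
  define den where "den x = snd (quotient_of (c x))" for x
  show "(\<Prod>x\<in>T. den x) > 0"
    by (simp add: den_def prod_pos quotient_of_denom_pos')
  fix x assume "x \<in> T"
  have "c x = of_int (fst (quotient_of (c x))) / of_int (den x)"
    unfolding den_def by (rule quotient_of_div) simp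
  moreover have "(\<Prod>y\<in>T. den y) = den x * (\<Prod>y\<in>T - {x}. den y)"
    using assms \<open>x \<in> T\<close> by (rule prod.remove)
  moreover have "den x \<noteq> 0"
    using quotient_of_denom_pos'[of "c x"] by (simp add: den_def)
  ultimately have "of_int (\<Prod>y\<in>T. den y) * c x
      = of_int (fst (quotient_of (c x)) * (\<Prod>y\<in>T - {x}. den y))"
    by (simp add: field_simps)
  then show "of_int (\<Prod>y\<in>T. den y) * c x \<in> \<int>"
    by (simp only: Ints_of_int)
qed

lemma rat_null_combination_vanishes_mod_prime_power:
  fixes c :: "'x \<Rightarrow> rat" and G :: "'x \<Rightarrow> 'x \<Rightarrow> int"
  assumes "prime P" "finite T"
    and null: "\<And>B. B \<in> T \<Longrightarrow> (\<Sum>A\<in>T. c A * of_int (G A B)) = 0"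
    and diag: "\<And>A. A \<in> T \<Longrightarrow> \<not> P ^ Suc s dvd G A A"
    and off: "\<And>A B. A \<in> T \<Longrightarrow> B \<in> T \<Longrightarrow> A \<noteq> B \<Longrightarrow> P ^ Suc s dvd G A B"
    and "A \<in> T"
  shows "c A = 0"
proof -
  obtain d :: int where "d > 0" and "\<And>A. A \<in> T \<Longrightarrow> of_int d * c A \<in> \<int>"
    using common_denominator[OF \<open>finite T\<close>] by blast
  then have "\<forall>A\<in>T. \<exists>z. of_int d * c A = of_int z"
    by (auto elim!: Ints_cases)
  then obtain e where e: "\<And>A. A \<in> T \<Longrightarrow> of_int d * c A = of_int (e A)"
    by (auto dest!: bchoice)
  have int_null: "(\<Sum>A\<in>T. e A * G A B) = 0" if "B \<in> T" for B
  proof -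
    have "rat_of_int (\<Sum>A\<in>T. e A * G A B) = (\<Sum>A\<in>T. of_int d * c A * of_int (G A B))"
      unfolding of_int_sum of_int_mult by (rule sum.cong) (simp_all add: e)
    also have "\<dots> = of_int d * (\<Sum>A\<in>T. c A * of_int (G A B))"
      by (simp add: sum_distrib_left mult.assoc)
    also have "\<dots> = 0"
      using null[OF that] by simp
    finally show ?thesis
      by (simp only: of_int_eq_0_iff)
  qed
  have "e A = 0"
    by (rule null_combination_vanishes_mod_prime_power[OF assms(1,2) int_null diag off \<open>A \<in> T\<close>])
  then show ?thesis
    using e[OF \<open>A \<in> T\<close>] \<open>d > 0\<close> by simp
qed

lemma gram_rows_inj_on:
  fixes G :: "'x \<Rightarrow> 'x \<Rightarrow> int"
  assumes "\<And>A. A \<in> T \<Longrightarrow> \<not> m dvd G A A"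
    and "\<And>A B. A \<in> T \<Longrightarrow> B \<in> T \<Longrightarrow> A \<noteq> B \<Longrightarrow> m dvd G A B"
  shows "inj_on (\<lambda>A B. rat_of_int (G A B)) T"
proof
  fix A B assume "A \<in> T" "B \<in> T" and rows: "(\<lambda>C. rat_of_int (G A C)) = (\<lambda>C. rat_of_int (G B C))"
  have "rat_of_int (G A A) = rat_of_int (G B A)"
    using fun_cong[OF rows, of A] .
  then have "G A A = G B A"
    by simp
  then show "A = B"
    using assms(1)[OF \<open>A \<in> T\<close>] assms(2)[OF \<open>B \<in> T\<close> \<open>A \<in> T\<close>] by auto
qed

lemma gram_rows_independent:
  fixes G :: "'x \<Rightarrow> 'x \<Rightarrow> int"
  assumes "prime P" "finite T"
    and diag: "\<And>A. A \<in> T \<Longrightarrow> \<not> P ^ Suc s dvd G A A"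
    and off: "\<And>A B. A \<in> T \<Longrightarrow> B \<in> T \<Longrightarrow> A \<noteq> B \<Longrightarrow> P ^ Suc s dvd G A B"
  shows "fun_vs.independent ((\<lambda>A B. rat_of_int (G A B)) ` T)"
proof (rule fun_vs.independent_if_scalars_zero)
  let ?row = "\<lambda>A B. rat_of_int (G A B)"
  show "finite (?row ` T)"
    using \<open>finite T\<close> by simp
  fix u v assume sum0: "(\<Sum>w\<in>?row ` T. fun_scale (u w) w) = 0" and "v \<in> ?row ` T"
  then obtain A where "A \<in> T" "v = ?row A"
    by blast
  have "inj_on ?row T"
    using diag off by (rule gram_rows_inj_on)
  then have "(\<Sum>C\<in>T. fun_scale (u (?row C)) (?row C)) = 0"
    using sum0 by (simp add: sum.reindex)
  then have "(\<Sum>C\<in>T. fun_scale (u (?row C)) (?row C)) B = 0" for B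
    by simp
  then have null: "(\<Sum>C\<in>T. u (?row C) * of_int (G C B)) = 0" for B
    by (simp only: sum_fun_apply fun_scale_apply)
  have "u (?row A) = 0"
    by (rule rat_null_combination_vanishes_mod_prime_power[OF assms(1,2) null diag off \<open>A \<in> T\<close>])
  then show "u v = 0"
    using \<open>v = ?row A\<close> by simp
qed

lemma card_le_if_gram_rows_in_multilinear_polys:
  fixes G :: "'a set \<Rightarrow> 'a set \<Rightarrow> int"
  assumes "prime P" "finite T" "finite N"
    and diag: "\<And>A. A \<in> T \<Longrightarrow> \<not> P ^ Suc s dvd G A A"
    and off: "\<And>A B. A \<in> T \<Longrightarrow> B \<in> T \<Longrightarrow> A \<noteq> B \<Longrightarrow> P ^ Suc s dvd G A B"
    and rows: "\<And>A. A \<in> T \<Longrightarrow> (\<lambda>B. rat_of_int (G A B)) \<in> multilinear_polys N d"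
  shows "card T \<le> (\<Sum>i=0..d. card N choose i)"
proof -
  let ?row = "\<lambda>A B. rat_of_int (G A B)"
  have "inj_on ?row T"
    using diag off by (rule gram_rows_inj_on)
  then have "card T = card (?row ` T)"
    by (simp add: card_image)
  also have "\<dots> \<le> (\<Sum>i=0..d. card N choose i)"
  proof (rule card_independent_multilinear_polys_le[OF \<open>finite N\<close>])
    show "fun_vs.independent (?row ` T)"
      using assms(1,2) diag off by (rule gram_rows_independent)
    show "?row ` T \<subseteq> multilinear_polys N d"
      using rows by blast
  qed
  finally show ?thesis .
qed

definition diff_gram :: "nat set \<Rightarrow> 'a set \<Rightarrow> 'a set \<Rightarrow> int" where
  "diff_gram L A B = (\<Prod>l\<in>L. int (card (A - B)) - int l)"

lemma diff_gram_diag_not_dvd: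
  assumes "prime p" "finite L" "0 \<notin> L"
  shows "\<not> int p ^ Suc (\<Sum>l\<in>L. multiplicity p l) dvd diff_gram L A A"
proof
  let ?N = "\<Prod>l\<in>L. l"
  assume "int p ^ Suc (\<Sum>l\<in>L. multiplicity p l) dvd diff_gram L A A"
  moreover have "\<bar>diff_gram L A A\<bar> = int ?N"
    by (simp add: diff_gram_def abs_prod)
  ultimately have "p ^ Suc (\<Sum>l\<in>L. multiplicity p l) dvd ?N"
    by (metis dvd_abs_iff of_nat_power int_dvd_int_iff)
  moreover have "multiplicity p ?N = (\<Sum>l\<in>L. multiplicity p l)"
    using assms by (intro prime_elem_multiplicity_prod_distrib) auto
  moreover have "?N \<noteq> 0" "\<not> is_unit p"
    using assms by (auto simp: not_prime_unit)
  ultimately show False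
    using power_dvd_iff_le_multiplicity[of ?N p "Suc (\<Sum>l\<in>L. multiplicity p l)"] by simp
qed

lemma diff_gram_dvd_if_cong:
  assumes "finite L" "l \<in> L" "[card (A - B) = l] (mod q)"
  shows "int q dvd diff_gram L A B"
proof -
  have "[int (card (A - B)) = int l] (mod int q)"
    using assms(3) by (simp only: cong_int_iff)
  then have "int q dvd int (card (A - B)) - int l"
    by (simp only: cong_iff_dvd_diff)
  also have "\<dots> dvd diff_gram L A B"
    unfolding diff_gram_def using assms(1,2) by (rule dvd_prodI)
  finally show ?thesis .
qed

lemma diff_gram_row_in_multilinear_polys:
  assumes "finite L" "finite N" "A \<subseteq> N"
  shows "(\<lambda>B. rat_of_int (diff_gram L A B)) \<in> multilinear_polys N (card L)"
proof -
  have "(\<lambda>B. \<Prod>l\<in>L. of_nat (card (A - B)) - of_nat l :: rat) \<in> multilinear_polys N (card L)"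
    using assms(1,3) finite_subset[OF assms(3,2)] by (rule prod_card_Diff_in_multilinear_polys)
  then show ?thesis
    by (simp add: diff_gram_def of_int_prod)
qed

theorem mainTheorem12:
  fixes p k q n :: nat and L :: "nat set" and F :: "nat set set"
  assumes "prime p" and "q = p ^ k"
    and "L \<subseteq> {1..q-1}"
    and "F \<subseteq> Pow {1..n}"
    and "mod_L_diff_sperner q L F"
    and "(\<Sum>l\<in>L. multiplicity p l) < k"
  shows "card F \<le> (\<Sum>i=0..card L. n choose i)"
proof -
  define s where "s = (\<Sum>l\<in>L. multiplicity p l)"
  have "finite L" "0 \<notin> L"
    using assms(3) by (auto intro: finite_subset[OF assms(3)])
  have "int p ^ Suc s dvd int q"
    using le_imp_power_dvd[of "Suc s" k "int p"] assms(2,6) by (simp add: s_def)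
  then have off: "int p ^ Suc s dvd diff_gram L A B" if "A \<in> F" "B \<in> F" "A \<noteq> B" for A B
    using assms(5)[unfolded mod_L_diff_sperner_def, rule_format, OF that]
      diff_gram_dvd_if_cong[OF \<open>finite L\<close>] dvd_trans by blast
  have "card F \<le> (\<Sum>i=0..card L. card {1..n} choose i)"
  proof (rule card_le_if_gram_rows_in_multilinear_polys[where P = "int p" and s = s])
    show "\<not> int p ^ Suc s dvd diff_gram L A A" for A
      unfolding s_def using assms(1) \<open>finite L\<close> \<open>0 \<notin> L\<close> by (rule diff_gram_diag_not_dvd)
    show "(\<lambda>B. rat_of_int (diff_gram L A B)) \<in> multilinear_polys {1..n} (card L)" if "A \<in> F" for A
      using that assms(4) by (intro diff_gram_row_in_multilinear_polys[OF \<open>finite L\<close>]) auto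
  qed (use assms(1,4) off in \<open>auto intro: finite_subset[OF assms(4)]\<close>)
  then show ?thesis
    by simp
qed

end
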